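(* Let $B$ be an nbc basis of $M$ with $\mathrm{IA}(B)=\{c_1>\cdots>c_{k+1}\}$, and set $S_B=B-\mathrm{IA}(B)=\{e_1>\cdots>e_{r-k}\}$ and $T_B=(E-B)-\min(E-B)=\{e_{r-k+1}<\cdots<e_{n-k-1}\}$. Then: (1) The largest index $i$ such that $c_i\notin\mathrm{cl}(S_B)\cup\mathrm{cl}^\perp(T_B)$ exists and equals the smallest index $i$ such that $\mathrm{cl}(S_B\cup\{c_1,\dots,c_i\})\cup\mathrm{cl}^\perp(T_B)=E$. (2) With this $i$, the set of $n-1$ pairs $F^+_j|G^+_j$, $1\le j\le n-1$, given by $\mathrm{cl}\{e_1,\dots,e_j\}\,|\,E$ for $1\le j\le r-k$; $\mathrm{cl}(S_B\cup\{c_1,\dots,c_{j-(r-k)}\})\,|\,E$ for $1\le j-(r-k)\le i-1$; $\mathrm{cl}(S_B\cup\{c_1,\dots,c_{j-(r-k)}\})\,|\,\mathrm{cl}^\perp(T_B)$ for $i\le j-(r-k)\le k$; $E\,|\,\mathrm{cl}^\perp\{e_{j-k},\dots,e_{n-k-1}\}$ for $r+1\le j\le n-1$, is a maximal biflag of $M$.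
   Context: Let $M$ be a matroid with no loops and no coloops on the ground set $E=\{0,1,\dots,n\}$, totally ordered by the usual order of integers, of rank $r+1$; its dual $M^\perp$ has rank $n-r$. Write $\mathrm{cl}$, $\mathrm{cl}^\perp$ for the closure operators of $M$, $M^\perp$. A biflat of $M$ is a pair $F|G$ where $F$ is a flat of $M$, $G$ is a flat of $M^\perp$, both are nonempty, they are not both equal to $E$, and $F\cup G=E$. Two biflats $F|G$, $F'|G'$ are compatible if ($F\subseteq F'$ and $G\supseteq G'$) or ($F\supseteq F'$ and $G\subseteq G'$). A biflag is a set of pairwise compatible biflats with $\bigcup_{F|G}(F\cap G)\neq E$; maximal means maximal under inclusion among biflags. For a basis $B$ and $i\in B$, $C^\perp(B,i)$ is the unique cocircuit of $M$ contained in $(E-B)\cup i$ and containing $i$; for $i\notin B$, $C(B,i)$ is the unique circuit contained in $B\cup i$ and containing $i$. $\mathrm{IA}(B)=\{i\in B: i=\min C^\perp(B,i)\}$, $\mathrm{EA}(B)=\{i\notin B: i=\min C(B,i)\}$. $B$ is an nbc basis if $\mathrm{EA}(B)=\emptyset$. *)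

theory Defs
  imports Main
begin

definition matroid :: "'a set \<Rightarrow> ('a set \<Rightarrow> bool) \<Rightarrow> bool" where
  "matroid E indep \<longleftrightarrow> finite E \<and> indep {} \<and>
     (\<forall>X. indep X \<longrightarrow> X \<subseteq> E) \<and>
     (\<forall>X Y. indep X \<and> Y \<subseteq> X \<longrightarrow> indep Y) \<and>
     (\<forall>X Y. indep X \<and> indep Y \<and> card X < card Y \<longrightarrow> (\<exists>y\<in>Y - X. indep (insert y X)))"

definition rk :: "('a set \<Rightarrow> bool) \<Rightarrow> 'a set \<Rightarrow> nat" where
  "rk indep X = Max {card I | I. I \<subseteq> X \<and> indep I}"

definition cl :: "'a set \<Rightarrow> ('a set \<Rightarrow> bool) \<Rightarrow> 'a set \<Rightarrow> 'a set" where
  "cl E indep X = {x \<in> E. rk indep (insert x X) = rk indep X}"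

definition flat :: "'a set \<Rightarrow> ('a set \<Rightarrow> bool) \<Rightarrow> 'a set \<Rightarrow> bool" where
  "flat E indep F \<longleftrightarrow> F \<subseteq> E \<and> cl E indep F = F"

definition basis :: "'a set \<Rightarrow> ('a set \<Rightarrow> bool) \<Rightarrow> 'a set \<Rightarrow> bool" where
  "basis E indep B \<longleftrightarrow> indep B \<and> (\<forall>x\<in>E - B. \<not> indep (insert x B))"

definition dual_indep :: "'a set \<Rightarrow> ('a set \<Rightarrow> bool) \<Rightarrow> 'a set \<Rightarrow> bool" where
  "dual_indep E indep X \<longleftrightarrow> X \<subseteq> E \<and> (\<exists>B. basis E indep B \<and> X \<inter> B = {})"

definition circuit :: "'a set \<Rightarrow> ('a set \<Rightarrow> bool) \<Rightarrow> 'a set \<Rightarrow> bool" where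
  "circuit E indep C \<longleftrightarrow> C \<subseteq> E \<and> \<not> indep C \<and> (\<forall>x\<in>C. indep (C - {x}))"

definition cocircuit :: "'a set \<Rightarrow> ('a set \<Rightarrow> bool) \<Rightarrow> 'a set \<Rightarrow> bool" where
  "cocircuit E indep D \<longleftrightarrow> circuit E (dual_indep E indep) D"

definition dual_cl :: "'a set \<Rightarrow> ('a set \<Rightarrow> bool) \<Rightarrow> 'a set \<Rightarrow> 'a set" where
  "dual_cl E indep X = cl E (dual_indep E indep) X"

definition dual_flat :: "'a set \<Rightarrow> ('a set \<Rightarrow> bool) \<Rightarrow> 'a set \<Rightarrow> bool" where
  "dual_flat E indep G \<longleftrightarrow> flat E (dual_indep E indep) G"

definition loop :: "'a set \<Rightarrow> ('a set \<Rightarrow> bool) \<Rightarrow> 'a \<Rightarrow> bool" where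
  "loop E indep x \<longleftrightarrow> x \<in> E \<and> \<not> indep {x}"

definition coloop :: "'a set \<Rightarrow> ('a set \<Rightarrow> bool) \<Rightarrow> 'a \<Rightarrow> bool" where
  "coloop E indep x \<longleftrightarrow> loop E (dual_indep E indep) x"

definition fund_circuit :: "'a set \<Rightarrow> ('a set \<Rightarrow> bool) \<Rightarrow> 'a set \<Rightarrow> 'a \<Rightarrow> 'a set" where
  "fund_circuit E indep B i = (THE C. circuit E indep C \<and> C \<subseteq> insert i B \<and> i \<in> C)"

definition fund_cocircuit :: "'a set \<Rightarrow> ('a set \<Rightarrow> bool) \<Rightarrow> 'a set \<Rightarrow> 'a \<Rightarrow> 'a set" where
  "fund_cocircuit E indep B i = (THE D. cocircuit E indep D \<and> D \<subseteq> insert i (E - B) \<and> i \<in> D)"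

definition IA :: "'a::linorder set \<Rightarrow> ('a set \<Rightarrow> bool) \<Rightarrow> 'a set \<Rightarrow> 'a set" where
  "IA E indep B = {i \<in> B. i = Min (fund_cocircuit E indep B i)}"

definition EA :: "'a::linorder set \<Rightarrow> ('a set \<Rightarrow> bool) \<Rightarrow> 'a set \<Rightarrow> 'a set" where
  "EA E indep B = {i \<in> E - B. i = Min (fund_circuit E indep B i)}"

definition nbc_basis :: "'a::linorder set \<Rightarrow> ('a set \<Rightarrow> bool) \<Rightarrow> 'a set \<Rightarrow> bool" where
  "nbc_basis E indep B \<longleftrightarrow> basis E indep B \<and> EA E indep B = {}"

text \<open>Biflats, compatibility, biflags. A biflat F|G is represented as the pair (F, G).\<close>
definition biflat :: "'a set \<Rightarrow> ('a set \<Rightarrow> bool) \<Rightarrow> 'a set \<times> 'a set \<Rightarrow> bool" where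
  "biflat E indep FG \<longleftrightarrow> (case FG of (F, G) \<Rightarrow>
     flat E indep F \<and> dual_flat E indep G \<and> F \<noteq> {} \<and> G \<noteq> {} \<and>
     \<not> (F = E \<and> G = E) \<and> F \<union> G = E)"

definition compatible :: "'a set \<times> 'a set \<Rightarrow> 'a set \<times> 'a set \<Rightarrow> bool" where
  "compatible FG FG' \<longleftrightarrow> (case FG of (F, G) \<Rightarrow> case FG' of (F', G') \<Rightarrow>
     (F \<subseteq> F' \<and> G' \<subseteq> G) \<or> (F' \<subseteq> F \<and> G \<subseteq> G'))"

definition biflag :: "'a set \<Rightarrow> ('a set \<Rightarrow> bool) \<Rightarrow> ('a set \<times> 'a set) set \<Rightarrow> bool" where
  "biflag E indep X \<longleftrightarrow> (\<forall>p\<in>X. biflat E indep p) \<and>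
     (\<forall>p\<in>X. \<forall>q\<in>X. compatible p q) \<and> (\<Union>(F, G)\<in>X. F \<inter> G) \<noteq> E"

definition maximal_biflag :: "'a set \<Rightarrow> ('a set \<Rightarrow> bool) \<Rightarrow> ('a set \<times> 'a set) set \<Rightarrow> bool" where
  "maximal_biflag E indep X \<longleftrightarrow> biflag E indep X \<and>
     (\<forall>Y. biflag E indep Y \<and> X \<subseteq> Y \<longrightarrow> Y = X)"

end

(* Let m = min (E - B) and C = C(B, m). As B is nbc, a = min C differs from m, so a lies in B; every
   element of E - B is at least m > a, so a is internally active, say a = c_i0. Dually, for
   T = E - B - m the coclosure cl^perp(T) consists exactly of the elements outside C. Hence c_j avoids
   cl(S) \<union> cl^perp(T) iff c_j \<in> C iff j \<le> i0 (the c_j decrease); the prefix S \<union> {c_1..c_i0} spans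
   C - m and hence m, so together with cl^perp(T) it covers E, whereas shorter prefixes miss a.

   In (2) the F-parts are the closures of the prefixes of the ordering e_1, ..., e_(r-k), c_1, ...,
   c_(k+1) of B, and the G-parts the coclosures of the prefixes of the ordering e_(n-k-1), ...,
   e_(r-k+1), m of E - B. Their ranks trace a monotone staircase through [1, r+1] x [1, n-r]. A
   biflat compatible with all the pairs is determined by its two ranks, and the covering condition of
   a biflag (with the element a and the covering at i0) forces this rank pair onto the staircase. *)

theory Submission
  imports Defs
begin

lemma card_exchange:
  assumes "finite B" "y \<in> B" "x \<notin> B"
  shows "card (insert x (B - {y})) = card B"
proof -
  have "0 < card B" using assms(1,2) card_gt_0_iff by blast
  then show ?thesis using assms by simp
qed

locale matroid_on =
  fixes E :: "'a set" and ind :: "'a set \<Rightarrow> bool"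
  assumes matroid: "matroid E ind"
begin

lemma finite_ground: "finite E"
  using matroid unfolding matroid_def by blast

lemma indep_empty: "ind {}"
  using matroid unfolding matroid_def by blast

lemma indep_subset_ground: "ind X \<Longrightarrow> X \<subseteq> E"
  using matroid unfolding matroid_def by blast

lemma indep_subset: "ind X \<Longrightarrow> Y \<subseteq> X \<Longrightarrow> ind Y"
  using matroid unfolding matroid_def by blast

lemma indep_augment:
  "ind X \<Longrightarrow> ind Y \<Longrightarrow> card X < card Y \<Longrightarrow> \<exists>y\<in>Y - X. ind (insert y X)"
  using matroid unfolding matroid_def by blast

lemma indep_finite: "ind X \<Longrightarrow> finite X"
  using indep_subset_ground finite_ground finite_subset by blast

definition basis_of :: "'a set \<Rightarrow> 'a set \<Rightarrow> bool" where
  "basis_of X I \<longleftrightarrow> I \<subseteq> X \<and> ind I \<and> (\<forall>x\<in>X-I. \<not> ind (insert x I))"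

lemma basis_of_extend:
  assumes "ind I" "I \<subseteq> X"
  shows "\<exists>J. I \<subseteq> J \<and> basis_of X J"
proof -
  let ?S = "{J. I \<subseteq> J \<and> J \<subseteq> X \<and> ind J}"
  have finS: "finite ?S"
    by (rule finite_subset[of _ "Pow E"]) (use indep_subset_ground finite_ground in auto)
  have "I \<in> ?S" using assms by auto
  define m where "m = Max (card ` ?S)"
  have "m \<in> card ` ?S" unfolding m_def using finS \<open>I \<in> ?S\<close> by (intro Max_in) auto
  then obtain J where J: "J \<in> ?S" "card J = m" by auto
  have "basis_of X J" unfolding basis_of_def
  proof (intro conjI ballI)
    show "J \<subseteq> X" "ind J" using J by auto
    fix x assume x: "x \<in> X - J"
    show "\<not> ind (insert x J)"
    proof
      assume h: "ind (insert x J)"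
      then have "insert x J \<in> ?S" using J x by auto
      then have "card (insert x J) \<le> m" unfolding m_def using finS by (intro Max_ge) auto
      moreover have "card (insert x J) = Suc (card J)" using x indep_finite[OF h] by auto
      ultimately show False using J by simp
    qed
  qed
  then show ?thesis using J by auto
qed

lemma card_basis_of:
  assumes "basis_of X I" shows "card I = rk ind X"
proof -
  have fin: "finite {card J | J. J \<subseteq> X \<and> ind J}"
    by (rule finite_subset[of _ "card ` Pow E"]) (use indep_subset_ground finite_ground in auto)
  show ?thesis unfolding rk_def
  proof (rule Max_eqI[symmetric, OF fin])
    show "card I \<in> {card J | J. J \<subseteq> X \<and> ind J}" using assms unfolding basis_of_def by auto
    fix y assume "y \<in> {card J | J. J \<subseteq> X \<and> ind J}"
    then obtain J where J: "J \<subseteq> X" "ind J" "y = card J" by auto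
    show "y \<le> card I"
    proof (rule ccontr)
      assume "\<not> y \<le> card I"
      then obtain z where "z \<in> J - I" "ind (insert z I)" using indep_augment[of I J] assms J unfolding basis_of_def by auto
      then show False using assms J unfolding basis_of_def by auto
    qed
  qed
qed

lemma ex_basis_of: "\<exists>I. basis_of X I"
  using basis_of_extend[of "{}" X] indep_empty by auto

lemma rk_indep: "ind X \<Longrightarrow> rk ind X = card X"
  using card_basis_of[of X X] unfolding basis_of_def by auto

lemma cl_basis_of:
  assumes "basis_of X I"
  shows "cl E ind X = {x\<in>E. x \<in> I \<or> \<not> ind (insert x I)}"
proof (rule set_eqI)
  fix x
  have I: "I \<subseteq> X" "ind I" using assms unfolding basis_of_def by auto
  show "x \<in> cl E ind X \<longleftrightarrow> x \<in> {x\<in>E. x \<in> I \<or> \<not> ind (insert x I)}"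
  proof (cases "x \<in> E")
    case False then show ?thesis unfolding cl_def by auto
  next
    case True
    show ?thesis
    proof (cases "x \<in> I")
      case True
      then have "insert x X = X" using I by auto
      then show ?thesis using \<open>x \<in> E\<close> True unfolding cl_def by auto
    next
      case xI: False
      show ?thesis
      proof (cases "ind (insert x I)")
        case False
        have "basis_of (insert x X) I" using assms False unfolding basis_of_def by auto
        then have "rk ind (insert x X) = rk ind X" using card_basis_of assms by metis
        then show ?thesis using \<open>x \<in> E\<close> False unfolding cl_def by auto
      next
        case True
        obtain K where K: "insert x I \<subseteq> K" "basis_of (insert x X) K"
          using basis_of_extend[OF True, of "insert x X"] I by auto
        have "finite K" using K indep_finite unfolding basis_of_def by auto
        then have "card (insert x I) \<le> card K" using K card_mono by blast
        moreover have "card (insert x I) = Suc (card I)" using xI indep_finite[OF I(2)] by auto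
        ultimately have "rk ind (insert x X) \<noteq> rk ind X"
          using card_basis_of[OF K(2)] card_basis_of[OF assms] by auto
        then show ?thesis using True xI unfolding cl_def by auto
      qed
    qed
  qed
qed

lemma cl_indep: "ind I \<Longrightarrow> cl E ind I = {x\<in>E. x \<in> I \<or> \<not> ind (insert x I)}"
  by (rule cl_basis_of) (auto simp: basis_of_def)

lemma cl_subset_ground: "cl E ind X \<subseteq> E"
  unfolding cl_def by auto
lemma subset_cl: "X \<subseteq> E \<Longrightarrow> X \<subseteq> cl E ind X"
  unfolding cl_def by (auto simp: insert_absorb)

lemma basis_of_cl: assumes "basis_of X I" "X \<subseteq> E" shows "basis_of (cl E ind X) I"
  using assms subset_cl[OF assms(2)] unfolding cl_basis_of[OF assms(1)] by (auto simp: basis_of_def)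

lemma cl_cl: "X \<subseteq> E \<Longrightarrow> cl E ind (cl E ind X) = cl E ind X"
proof -
  assume X: "X \<subseteq> E"
  obtain I where I: "basis_of X I" using ex_basis_of by blast
  show ?thesis using cl_basis_of[OF I] cl_basis_of[OF basis_of_cl[OF I X]] by simp
qed

lemma flat_cl: "X \<subseteq> E \<Longrightarrow> flat E ind (cl E ind X)"
  unfolding flat_def using cl_cl cl_subset_ground by auto

lemma cl_mono: assumes "X \<subseteq> Y" shows "cl E ind X \<subseteq> cl E ind Y"
proof -
  obtain I where I: "basis_of X I" using ex_basis_of by blast
  obtain J where J: "I \<subseteq> J" "basis_of Y J" using basis_of_extend[of I Y] I assms unfolding basis_of_def by auto
  have "\<not> ind (insert x J)" if "\<not> ind (insert x I)" for x
    using that J(1) indep_subset[of "insert x J" "insert x I"] by auto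
  then show ?thesis unfolding cl_basis_of[OF I] cl_basis_of[OF J(2)] using J(1) by auto
qed

lemma rk_cl: "X \<subseteq> E \<Longrightarrow> rk ind (cl E ind X) = rk ind X"
proof -
  assume X: "X \<subseteq> E"
  obtain I where I: "basis_of X I" using ex_basis_of by blast
  show ?thesis using card_basis_of[OF I] card_basis_of[OF basis_of_cl[OF I X]] by simp
qed

lemma rk_mono: assumes "X \<subseteq> Y" shows "rk ind X \<le> rk ind Y"
proof -
  obtain I where I: "basis_of X I" using ex_basis_of by blast
  obtain J where J: "I \<subseteq> J" "basis_of Y J" using basis_of_extend[of I Y] I assms unfolding basis_of_def by auto
  have "finite J" using J indep_finite unfolding basis_of_def by auto
  then show ?thesis using card_basis_of[OF I] card_basis_of[OF J(2)] J(1) card_mono by metis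
qed

lemma cl_eq_if_rk_eq: assumes "X \<subseteq> Y" "rk ind X = rk ind Y" shows "cl E ind Y = cl E ind X"
proof -
  obtain I where I: "basis_of X I" using ex_basis_of by blast
  obtain J where J: "I \<subseteq> J" "basis_of Y J" using basis_of_extend[of I Y] I assms unfolding basis_of_def by auto
  have "finite J" using J indep_finite unfolding basis_of_def by auto
  moreover have "card I = card J" using card_basis_of[OF I] card_basis_of[OF J(2)] assms by simp
  ultimately have "I = J" using J(1) card_subset_eq by blast
  then show ?thesis using cl_basis_of[OF I] cl_basis_of[OF J(2)] by simp
qed

lemma flat_eq_if_rk_eq: assumes "flat E ind F" "flat E ind G" "F \<subseteq> G" "rk ind F = rk ind G"
  shows "F = G"
  using cl_eq_if_rk_eq[OF assms(3,4)] assms(1,2) unfolding flat_def by simp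

lemma notin_cl: "ind (insert x X) \<Longrightarrow> x \<notin> X \<Longrightarrow> x \<notin> cl E ind X"
  using cl_indep[of X] indep_subset[of "insert x X" X] by auto

lemma in_cl: "ind X \<Longrightarrow> x \<in> E \<Longrightarrow> \<not> ind (insert x X) \<Longrightarrow> x \<in> cl E ind X"
  using cl_indep[of X] by auto

lemma basis_iff_basis_of: "basis E ind B \<longleftrightarrow> basis_of E B"
  unfolding basis_def basis_of_def using indep_subset_ground by auto

lemma card_basis: "basis E ind B \<Longrightarrow> card B = rk ind E"
  using basis_iff_basis_of card_basis_of by auto

lemma ex_basis: "\<exists>B. basis E ind B"
  using ex_basis_of basis_iff_basis_of by auto

lemma card_indep_le_rk: "ind I \<Longrightarrow> card I \<le> rk ind E"
  using rk_indep rk_mono indep_subset_ground by metis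

lemma basis_if_card_eq_rk: assumes "ind I" "card I = rk ind E" shows "basis E ind I"
  unfolding basis_def
proof (intro conjI ballI assms(1))
  fix x assume x: "x \<in> E - I"
  show "\<not> ind (insert x I)"
  proof
    assume h: "ind (insert x I)"
    have "card (insert x I) = Suc (card I)" using x indep_finite[OF assms(1)] by auto
    then show False using card_indep_le_rk[OF h] assms by simp
  qed
qed

lemma basis_indep: "basis E ind B \<Longrightarrow> ind B"
  unfolding basis_def by auto

lemma cl_basis: "basis E ind B \<Longrightarrow> cl E ind B = E"
  using cl_indep[of B] cl_subset_ground unfolding basis_def by auto



lemma basis_extend_avoiding:
  assumes X: "dual_indep E ind X" and I: "ind I" "I \<inter> X = {}"
  obtains B' where "basis E ind B'" "I \<subseteq> B'" "B' \<inter> X = {}"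
proof -
  obtain BX where BX: "basis E ind BX" "X \<inter> BX = {}" and XE: "X \<subseteq> E"
    using X unfolding dual_indep_def by auto
  obtain J where J: "I \<subseteq> J" "basis_of (E - X) J"
    using basis_of_extend[OF I(1), of "E - X"] I indep_subset_ground[OF I(1)] by auto
  have "BX \<subseteq> E - X" using BX indep_subset_ground[OF basis_indep[OF BX(1)]] by auto
  then have "rk ind E \<le> card J"
    using rk_mono[of BX "E - X"] card_basis_of[OF J(2)] rk_indep[OF basis_indep[OF BX(1)]]
      card_basis[OF BX(1)] by simp
  moreover have "ind J" "J \<inter> X = {}" using J(2) unfolding basis_of_def by auto
  ultimately have "basis E ind J" using basis_if_card_eq_rk card_indep_le_rk by (metis le_antisym)
  then show thesis using that J(1) \<open>J \<inter> X = {}\<close> by blast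
qed

lemma matroid_dual: "matroid E (dual_indep E ind)"
  unfolding matroid_def
proof (intro conjI allI impI finite_ground)
  show "dual_indep E ind {}" using ex_basis unfolding dual_indep_def by auto
  show "\<And>X. dual_indep E ind X \<Longrightarrow> X \<subseteq> E" unfolding dual_indep_def by auto
  show "\<And>X Y. dual_indep E ind X \<and> Y \<subseteq> X \<Longrightarrow> dual_indep E ind Y"
    unfolding dual_indep_def by blast
  fix X Y assume h: "dual_indep E ind X \<and> dual_indep E ind Y \<and> card X < card Y"
  then obtain BY where BY: "basis E ind BY" "Y \<inter> BY = {}" and XE: "X \<subseteq> E" and YE: "Y \<subseteq> E"
    unfolding dual_indep_def by auto
  have fin: "finite X" "finite Y" "finite BY"
    using XE YE finite_ground finite_subset indep_finite[OF basis_indep[OF BY(1)]] by auto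
  have "ind (BY - X)" using indep_subset basis_indep[OF BY(1)] by blast
  then obtain J where J: "basis E ind J" "BY - X \<subseteq> J" "J \<inter> X = {}"
    using basis_extend_avoiding h by blast
  show "\<exists>y\<in>Y - X. dual_indep E ind (insert y X)"
  proof (rule ccontr)
    assume none: "\<not> ?thesis"
    have "Y - X \<subseteq> J"
    proof
      fix y assume y: "y \<in> Y - X"
      show "y \<in> J"
      proof (rule ccontr)
        assume "y \<notin> J"
        then have "dual_indep E ind (insert y X)" unfolding dual_indep_def using J XE YE y by auto
        then show False using none y by auto
      qed
    qed
    \<comment> \<open>count inside the basis \<open>J \<supseteq> (BY - X) \<union> (Y - X)\<close>, which has the size of \<open>BY\<close>\<close>
    then have "card ((BY - X) \<union> (Y - X)) \<le> card J"
      using J(2) indep_finite[OF basis_indep[OF J(1)]] by (intro card_mono) auto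
    moreover have "card ((BY - X) \<union> (Y - X)) = card (BY - X) + card (Y - X)"
      using BY(2) fin by (intro card_Un_disjoint) auto
    moreover have "card J = card (BY - X) + card (BY \<inter> X)"
      using card_basis[OF J(1)] card_basis[OF BY(1)] card_Int_Diff[OF fin(3), of X] by simp
    moreover have "card (BY \<inter> X) \<le> card (X - Y)" using BY(2) fin by (intro card_mono) auto
    moreover have "card X = card (X - Y) + card (X \<inter> Y)" "card Y = card (Y - X) + card (X \<inter> Y)"
      using card_Int_Diff[OF fin(1), of Y] card_Int_Diff[OF fin(2), of X] by (simp_all add: Int_commute)
    ultimately show False using h by linarith
  qed
qed

lemma circuit_mem_iff_exchange:
  assumes B: "basis E ind B" and x: "x \<notin> B" and C: "circuit E ind C" "C \<subseteq> insert x B" "x \<in> C"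
    and y: "y \<in> B"
  shows "y \<in> C \<longleftrightarrow> ind (insert x (B - {y}))"
proof
  assume yC: "y \<in> C"
  have xy: "x \<noteq> y" using x y by auto
  have K: "ind (C - {y})" using C yC unfolding circuit_def by auto
  have xE: "x \<in> E" using C unfolding circuit_def by auto
  obtain J where J: "C - {y} \<subseteq> J" "basis_of (insert x B) J" using basis_of_extend[OF K, of "insert x B"] C by auto
  have "rk ind B \<le> rk ind (insert x B)" by (rule rk_mono) auto
  moreover have "rk ind (insert x B) \<le> rk ind E" using xE indep_subset_ground[OF basis_indep[OF B]] by (intro rk_mono) auto
  ultimately have cJ: "card J = card B" using card_basis_of[OF J(2)] rk_indep[OF basis_indep[OF B]] card_basis[OF B] by simp
  have "y \<notin> J"
  proof
    assume "y \<in> J"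
    then have "C \<subseteq> J" using J by auto
    then show False using C J indep_subset unfolding circuit_def basis_of_def by auto
  qed
  then have JW: "J \<subseteq> insert x (B - {y})" using J unfolding basis_of_def by auto
  have finB: "finite B" using indep_finite basis_indep B by auto
  have "card (insert x (B - {y})) = card B" using card_exchange[OF finB y x] .
  then have "J = insert x (B - {y})" using JW cJ finB by (intro card_subset_eq) auto
  then show "ind (insert x (B - {y}))" using J unfolding basis_of_def by auto
next
  assume h: "ind (insert x (B - {y}))"
  show "y \<in> C"
  proof (rule ccontr)
    assume "y \<notin> C"
    then have "C \<subseteq> insert x (B - {y})" using C by auto
    then show False using h C indep_subset unfolding circuit_def by auto
  qed
qed

lemma ex1_fund_circuit:
  assumes B: "basis E ind B" and x: "x \<in> E" "x \<notin> B"
  shows "\<exists>!C. circuit E ind C \<and> C \<subseteq> insert x B \<and> x \<in> C"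
proof (rule ex_ex1I)
  let ?S = "{C. C \<subseteq> insert x B \<and> \<not> ind C}"
  have "insert x B \<in> ?S" using B x unfolding basis_def by auto
  then obtain C where C: "C \<in> ?S" "\<forall>D\<in>?S. card C \<le> card D"
    using ex_has_least_nat[of "\<lambda>C. C \<in> ?S" "insert x B" card] by auto
  have finB: "finite (insert x B)" using indep_finite basis_indep B by auto
  have circ: "circuit E ind C" unfolding circuit_def
  proof (intro conjI ballI)
    show "C \<subseteq> E" using C x indep_subset_ground[OF basis_indep[OF B]] by auto
    show "\<not> ind C" using C by auto
    fix z assume z: "z \<in> C"
    show "ind (C - {z})"
    proof (rule ccontr)
      assume "\<not> ind (C - {z})"
      then have "C - {z} \<in> ?S" using C by auto
      then have "card C \<le> card (C - {z})" using C by auto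
      moreover have "finite C" using C finB finite_subset by auto
      ultimately show False using z card_Diff1_less[of C z] by simp
    qed
  qed
  have "x \<in> C"
  proof (rule ccontr)
    assume "x \<notin> C"
    then have "C \<subseteq> B" using C by auto
    then show False using C indep_subset basis_indep[OF B] by auto
  qed
  then show "\<exists>C. circuit E ind C \<and> C \<subseteq> insert x B \<and> x \<in> C" using circ C by auto
next
  fix C D assume C: "circuit E ind C \<and> C \<subseteq> insert x B \<and> x \<in> C"
    and D: "circuit E ind D \<and> D \<subseteq> insert x B \<and> x \<in> D"
  show "C = D"
  proof (rule set_eqI)
    fix z
    show "z \<in> C \<longleftrightarrow> z \<in> D"
      using circuit_mem_iff_exchange[OF B x(2), of C z] circuit_mem_iff_exchange[OF B x(2), of D z] C D by auto
  qed
qed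

lemma fund_circuit_spec:
  assumes B: "basis E ind B" and x: "x \<in> E" "x \<notin> B"
  shows "circuit E ind (fund_circuit E ind B x) \<and> fund_circuit E ind B x \<subseteq> insert x B
          \<and> x \<in> fund_circuit E ind B x"
  unfolding fund_circuit_def by (rule theI'[OF ex1_fund_circuit[OF assms]])


lemma basis_dual_complement:
  assumes B: "basis E ind B"
  shows "basis E (dual_indep E ind) (E - B)"
  unfolding basis_def
proof (intro conjI ballI notI)
  show "dual_indep E ind (E - B)" unfolding dual_indep_def using B by auto
  fix x assume x: "x \<in> E - (E - B)" and "dual_indep E ind (insert x (E - B))"
  then obtain B' where B': "basis E ind B'" "insert x (E - B) \<inter> B' = {}"
    unfolding dual_indep_def by auto
  have "B' \<subseteq> B" using B' indep_subset_ground[OF basis_indep[OF B'(1)]] by auto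
  moreover have "finite B" using indep_finite[OF basis_indep[OF B]] .
  moreover have "card B' = card B" using card_basis[OF B'(1)] card_basis[OF B] by simp
  ultimately have "B' = B" by (simp add: card_subset_eq)
  then show False using B' x by auto
qed

lemma basis_exchange:
  assumes B: "basis E ind B" and y: "y \<in> B" and x: "x \<in> E - B"
    and indep: "ind (insert x (B - {y}))"
  shows "basis E ind (insert x (B - {y}))"
proof -
  have "card (insert x (B - {y})) = card B"
    using card_exchange[OF indep_finite[OF basis_indep[OF B]] y] x by blast
  then show ?thesis using basis_if_card_eq_rk[OF indep] card_basis[OF B] by simp
qed

lemma dual_indep_exchange_iff:
  assumes B: "basis E ind B" and y: "y \<in> B" and x: "x \<in> E - B"
  shows "dual_indep E ind (insert y (E - B - {x})) \<longleftrightarrow> ind (insert x (B - {y}))"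
proof
  assume "dual_indep E ind (insert y (E - B - {x}))"
  then obtain B' where B': "basis E ind B'" "insert y (E - B - {x}) \<inter> B' = {}"
    unfolding dual_indep_def by auto
  have sub: "B' \<subseteq> insert x (B - {y})" using B' indep_subset_ground[OF basis_indep[OF B'(1)]] by auto
  have "finite B" using indep_finite[OF basis_indep[OF B]] .
  moreover have "card (insert x (B - {y})) = card B"
    using card_exchange[OF \<open>finite B\<close> y] x by blast
  ultimately have "B' = insert x (B - {y})"
    using sub card_basis[OF B] card_basis[OF B'(1)] by (intro card_subset_eq) auto
  then show "ind (insert x (B - {y}))" using basis_indep[OF B'(1)] by simp
next
  assume "ind (insert x (B - {y}))"
  then have "basis E ind (insert x (B - {y}))" using basis_exchange[OF B y x] by blast
  moreover have "insert y (E - B - {x}) \<inter> insert x (B - {y}) = {}" using x y by auto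
  ultimately show "dual_indep E ind (insert y (E - B - {x}))"
    unfolding dual_indep_def using y x indep_subset_ground[OF basis_indep[OF B]] by blast
qed

lemma mem_dual_cl_iff_notin_fund_circuit:
  assumes B: "basis E ind B" and x: "x \<in> E - B" and y: "y \<in> E"
  shows "y \<in> cl E (dual_indep E ind) (E - B - {x}) \<longleftrightarrow> y \<notin> fund_circuit E ind B x"
proof -
  interpret D: matroid_on E "dual_indep E ind" by unfold_locales (rule matroid_dual)
  let ?C = "fund_circuit E ind B x"
  have C: "circuit E ind ?C" "?C \<subseteq> insert x B" "x \<in> ?C"
    using fund_circuit_spec[OF B] x by auto
  have "dual_indep E ind (E - B)" using basis_dual_complement[OF B] unfolding basis_def by blast
  then have T: "dual_indep E ind (E - B - {x})" by (rule D.indep_subset) auto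
  consider "y \<in> B" | "y = x" | "y \<in> E - B - {x}" using y by blast
  then show ?thesis
  proof cases
    case 1
    then have "y \<in> ?C \<longleftrightarrow> ind (insert x (B - {y}))"
      using circuit_mem_iff_exchange[OF B _ C] x by blast
    then show ?thesis using D.cl_indep[OF T] dual_indep_exchange_iff[OF B 1 x] 1 x y by auto
  next
    case 2
    then show ?thesis using D.notin_cl[of y "E - B - {x}"] C(3) x
      \<open>dual_indep E ind (E - B)\<close> by (simp add: insert_absorb)
  next
    case 3
    then show ?thesis using D.subset_cl[of "E - B - {x}"] C(2) by auto
  qed
qed

definition flag :: "(nat \<Rightarrow> 'a) \<Rightarrow> nat \<Rightarrow> 'a set" where
  "flag b x = cl E ind (b ` {1..x})"

lemma flag_mono: "x \<le> x' \<Longrightarrow> flag b x \<subseteq> flag b x'"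
  unfolding flag_def by (intro cl_mono) auto

lemma flag_subset_ground: "flag b x \<subseteq> E"
  unfolding flag_def by (rule cl_subset_ground)

context
  fixes b :: "nat \<Rightarrow> 'a" and N :: nat
  assumes inj: "inj_on b {1..N}" and indep: "ind (b ` {1..N})"
begin

lemma flag_prefix_indep: "x \<le> N \<Longrightarrow> ind (b ` {1..x})"
  using indep by (rule indep_subset) auto

lemma rk_flag: "x \<le> N \<Longrightarrow> rk ind (flag b x) = x"
proof -
  assume x: "x \<le> N"
  have "card (b ` {1..x}) = x" using card_image[OF inj_on_subset[OF inj]] x by auto
  then show ?thesis unfolding flag_def
    using rk_cl[OF indep_subset_ground] rk_indep flag_prefix_indep[OF x] by simp
qed

lemma flat_flag: "x \<le> N \<Longrightarrow> flat E ind (flag b x)"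
  unfolding flag_def using flat_cl[OF indep_subset_ground[OF flag_prefix_indep]] .

lemma flag_nonempty: "1 \<le> x \<Longrightarrow> x \<le> N \<Longrightarrow> flag b x \<noteq> {}"
  unfolding flag_def using subset_cl[OF indep_subset_ground[OF flag_prefix_indep]] by fastforce

lemma flag_subset_iff: "x \<le> N \<Longrightarrow> x' \<le> N \<Longrightarrow> flag b x \<subseteq> flag b x' \<longleftrightarrow> x \<le> x'"
  using rk_mono[of "flag b x" "flag b x'"] rk_flag flag_mono by metis

lemma flag_eq_iff: "x \<le> N \<Longrightarrow> x' \<le> N \<Longrightarrow> flag b x = flag b x' \<longleftrightarrow> x = x'"
  using flag_subset_iff by (metis order.eq_iff)

lemma flat_eq_flag:
  assumes "flat E ind F" "rk ind F = x" "x \<le> N" "F \<subseteq> flag b x \<or> flag b x \<subseteq> F"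
  shows "F = flag b x"
  using assms(4)
proof
  assume "F \<subseteq> flag b x"
  then show ?thesis using flat_eq_if_rk_eq[OF assms(1) flat_flag[OF assms(3)]] rk_flag assms(2,3) by simp
next
  assume "flag b x \<subseteq> F"
  then show ?thesis using flat_eq_if_rk_eq[OF flat_flag[OF assms(3)] assms(1)] rk_flag assms(2,3) by simp
qed

end

lemma flag_top: "basis E ind (b ` {1..N}) \<Longrightarrow> flag b N = E"
  unfolding flag_def by (rule cl_basis)

lemma rk_pos: "x \<in> X \<Longrightarrow> ind {x} \<Longrightarrow> 1 \<le> rk ind X"
  using rk_mono[of "{x}" X] rk_indep[of "{x}"] by simp

end

lemma Min_fund_circuit_mem_IA:
  fixes E :: "'a::linorder set"
  assumes M: "matroid E ind" and nbc: "nbc_basis E ind B" and m: "m = Min (E - B)"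
    and ne: "E - B \<noteq> {}"
  shows "Min (fund_circuit E ind B m) \<in> IA E ind B" "Min (fund_circuit E ind B m) < m"
proof -
  interpret matroid_on E ind by unfold_locales (rule M)
  interpret D: matroid_on E "dual_indep E ind" by unfold_locales (rule matroid_dual)
  have B: "basis E ind B" using nbc unfolding nbc_basis_def by auto
  have fin: "finite (E - B)" using finite_ground by blast
  have m_mem: "m \<in> E - B" unfolding m using fin ne by (rule Min_in)
  let ?C = "fund_circuit E ind B m"
  let ?a = "Min ?C"
  have C: "circuit E ind ?C" "?C \<subseteq> insert m B" "m \<in> ?C" using fund_circuit_spec[OF B] m_mem by auto
  have "finite ?C" using C(1) finite_ground finite_subset unfolding circuit_def by blast
  then have a: "?a \<in> ?C" "?a \<le> m" using Min_in Min_le C(3) by blast+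
  have "?a \<noteq> m"
  proof
    assume "?a = m"
    then have "m \<in> EA E ind B" unfolding EA_def using m_mem by auto
    then show False using nbc unfolding nbc_basis_def by auto
  qed
  then show a_less: "?a < m" using a by simp
  have aB: "?a \<in> B" using a C(2) \<open>?a \<noteq> m\<close> by auto
  let ?D = "fund_cocircuit E ind B ?a"
  have "?D = fund_circuit E (dual_indep E ind) (E - B) ?a"
    unfolding fund_cocircuit_def fund_circuit_def cocircuit_def ..
  then have D: "?D \<subseteq> insert ?a (E - B)" "?a \<in> ?D"
    using D.fund_circuit_spec[OF basis_dual_complement[OF B], of ?a] aB
      indep_subset_ground[OF basis_indep[OF B]] by auto
  have "Min ?D = ?a"
  proof (rule Min_eqI)
    show "finite ?D" using D(1) finite_subset fin by blast
    show "?a \<in> ?D" by (fact D(2))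
    fix y assume "y \<in> ?D"
    then show "?a \<le> y" using D(1) a_less Min_le[OF fin] m by fastforce
  qed
  then show "?a \<in> IA E ind B" unfolding IA_def using aB by auto
qed

lemma biflag_union_psubset: "biflag E ind X \<Longrightarrow> (\<Union>(F, G)\<in>X. F \<inter> G) \<subset> E"
  unfolding biflag_def biflat_def flat_def by fastforce

lemma biflag_subset:
  assumes Y: "biflag E ind Y" and XY: "X \<subseteq> Y"
  shows "biflag E ind X"
proof -
  have "(\<Union>(F, G)\<in>X. F \<inter> G) \<subseteq> (\<Union>(F, G)\<in>Y. F \<inter> G)" using XY by (intro UN_mono) auto
  then have "(\<Union>(F, G)\<in>X. F \<inter> G) \<noteq> E" using biflag_union_psubset[OF Y] by (metis less_le_not_le)
  then show ?thesis using Y XY unfolding biflag_def by (meson subsetD)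
qed

lemma image_diff_atLeastAtMost:
  assumes "0 < N" "y \<le> N"
  shows "(\<lambda>t. N - t) ` {1..y} = {N-y..N-1::nat}"
proof (rule set_eqI, rule iffI)
  fix z assume "z \<in> (\<lambda>t. N - t) ` {1..y}" then show "z \<in> {N-y..N-1}" using assms by auto
next
  fix z assume "z \<in> {N-y..N-1}"
  then have "N - z \<in> {1..y}" "z = N - (N - z)" using assms by auto
  then show "z \<in> (\<lambda>t. N - t) ` {1..y}" by (rule image_eqI[rotated])
qed

locale ordered_nbc_basis =
  fixes n r k :: nat and indep :: "nat set \<Rightarrow> bool" and B :: "nat set"
    and c e :: "nat \<Rightarrow> nat"
  assumes matroid_M: "matroid {0..n} indep"
    and no_loops: "\<forall>x\<in>{0..n}. \<not> loop {0..n} indep x"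
    and no_coloops: "\<forall>x\<in>{0..n}. \<not> coloop {0..n} indep x"
    and rank: "rk indep {0..n} = r + 1"
    and nbc: "nbc_basis {0..n} indep B"
    and c_img: "IA {0..n} indep B = c ` {1..k+1}"
    and c_dec: "\<forall>a\<in>{1..k+1}. \<forall>b\<in>{1..k+1}. a < b \<longrightarrow> c b < c a"
    and S_img: "B - IA {0..n} indep B = e ` {1..r-k}"
    and T_img: "({0..n} - B) - {Min ({0..n} - B)} = e ` {r-k+1..n-k-1}"
begin

abbreviation E :: "nat set" where "E \<equiv> {0..n}"
abbreviation dind :: "nat set \<Rightarrow> bool" where "dind \<equiv> dual_indep E indep"
abbreviation clM :: "nat set \<Rightarrow> nat set" where "clM \<equiv> cl E indep"
abbreviation clD :: "nat set \<Rightarrow> nat set" where "clD \<equiv> cl E dind"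

sublocale M: matroid_on E indep
  by (rule matroid_on.intro) (fact matroid_M)

sublocale D: matroid_on E dind
  by (rule matroid_on.intro) (fact M.matroid_dual)

definition m :: nat where "m = Min (E - B)"
definition S :: "nat set" where "S = B - IA E indep B"
definition T :: "nat set" where "T = E - B - {m}"
definition C :: "nat set" where "C = fund_circuit E indep B m"
definition a :: nat where "a = Min C"

lemma basis_B: "basis E indep B"
  using nbc unfolding nbc_basis_def by auto

lemma indep_B: "indep B"
  using M.basis_indep[OF basis_B] .

lemma B_subset: "B \<subseteq> E"
  using M.indep_subset_ground[OF indep_B] .

lemma finite_B: "finite B"
  using B_subset finite_subset by blast

lemma card_B: "card B = r + 1"
  using M.card_basis[OF basis_B] rank by simp

lemma indep_singleton: "x \<in> E \<Longrightarrow> indep {x}"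
  using no_loops unfolding loop_def by auto

lemma dual_indep_singleton: "x \<in> E \<Longrightarrow> dind {x}"
  using no_coloops unfolding coloop_def loop_def by auto

lemma EB_nonempty: "E - B \<noteq> {}"
proof
  assume EB: "E - B = {}"
  obtain B' where B': "basis E indep B'" "0 \<notin> B'"
    using dual_indep_singleton[of 0] unfolding dual_indep_def by auto
  have "B' \<subseteq> B" using EB M.indep_subset_ground[OF M.basis_indep[OF B'(1)]] by blast
  then have "B' = B"
    using finite_B M.card_basis[OF B'(1)] M.card_basis[OF basis_B] by (simp add: card_subset_eq)
  then show False using EB B'(2) by auto
qed

lemma m_mem: "m \<in> E - B"
  unfolding m_def using EB_nonempty by (intro Min_in) auto

lemma card_EB: "card (E - B) = n - r"
  using card_Diff_subset[OF finite_B B_subset] card_B by simp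

lemma r_less_n: "r < n"
  using card_EB EB_nonempty by (metis card_gt_0_iff finite_Diff finite_atLeastAtMost zero_less_diff)

lemma EB_eq: "E - B = insert m T"
  using m_mem unfolding T_def by auto

lemma card_T: "card T = n - r - 1"
  unfolding T_def using card_EB m_mem by (simp add: card_Diff_singleton)

lemma C_spec: "C \<subseteq> insert m B" "m \<in> C"
  using M.fund_circuit_spec[OF basis_B] m_mem unfolding C_def by auto

lemma finite_C: "finite C"
  using C_spec finite_B finite_subset by blast

lemma clD_T_iff: "y \<in> E \<Longrightarrow> y \<in> clD T \<longleftrightarrow> y \<notin> C"
  unfolding T_def C_def using M.mem_dual_cl_iff_notin_fund_circuit[OF basis_B m_mem] .

lemma a_mem_C: "a \<in> C"
  unfolding a_def using finite_C C_spec(2) by (intro Min_in) auto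

lemma a_le: "x \<in> C \<Longrightarrow> a \<le> x"
  unfolding a_def using finite_C by (intro Min_le)

lemma a_IA: "a \<in> IA E indep B"
  using Min_fund_circuit_mem_IA[OF matroid_M nbc m_def EB_nonempty]
  unfolding a_def C_def by auto

lemma IA_subset: "IA E indep B \<subseteq> B"
  unfolding IA_def by auto

lemma a_mem_B: "a \<in> B"
  using a_IA IA_subset by blast

lemma a_mem_E: "a \<in> E"
  using a_mem_B B_subset by blast

lemma c_inj: "inj_on c {1..k+1}"
  unfolding inj_on_def by (metis c_dec linorder_neqE_nat less_irrefl)

lemma c_le_imp_ge: "x \<in> {1..k+1} \<Longrightarrow> y \<in> {1..k+1} \<Longrightarrow> c y \<le> c x \<Longrightarrow> x \<le> y"
  using c_dec by (metis leD le_less_linear)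

lemma c_mem_B: "x \<in> {1..k+1} \<Longrightarrow> c x \<in> B"
  using c_img IA_subset by auto

lemma k_le_r: "k \<le> r"
proof -
  have "card (IA E indep B) = k + 1" using c_img card_image[OF c_inj] by simp
  then show ?thesis using card_mono[OF finite_B IA_subset] card_B by simp
qed

lemma S_eq: "S = B - c ` {1..k+1}"
  unfolding S_def c_img ..

lemma S_subset: "S \<subseteq> B"
  unfolding S_def by auto

lemma S_e: "S = e ` {1..r-k}"
  using S_img unfolding S_def .

lemma T_e: "T = e ` {r-k+1..n-k-1}"
  using T_img unfolding T_def m_def .

definition i0 :: nat where "i0 = (THE i. i \<in> {1..k+1} \<and> c i = a)"

lemma i0: "i0 \<in> {1..k+1}" "c i0 = a"
proof -
  obtain i where i: "i \<in> {1..k+1}" "c i = a" using a_IA c_img by auto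
  have "i0 = i" unfolding i0_def
  proof (rule the_equality)
    show "i \<in> {1..k+1} \<and> c i = a" using i by simp
    fix x assume "x \<in> {1..k+1} \<and> c x = a"
    then show "x = i" using i inj_onD[OF c_inj, of x i] by simp
  qed
  then show "i0 \<in> {1..k+1}" "c i0 = a" using i by simp_all
qed

lemma c_notin_clM: "Y \<subseteq> B \<Longrightarrow> x \<in> {1..k+1} \<Longrightarrow> c x \<notin> Y \<Longrightarrow> c x \<notin> clM Y"
proof -
  assume Y: "Y \<subseteq> B" and x: "x \<in> {1..k+1}" "c x \<notin> Y"
  have "insert (c x) Y \<subseteq> B" using Y c_mem_B[OF x(1)] by simp
  then have "indep (insert (c x) Y)" using M.indep_subset[OF indep_B] by blast
  then show ?thesis using M.notin_cl x(2) by blast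
qed

lemma c_notin_cl_S_T_iff:
  assumes j: "j \<in> {1..k+1}"
  shows "c j \<notin> clM S \<union> clD T \<longleftrightarrow> c j \<in> C"
proof -
  have "c j \<notin> S" unfolding S_eq using j by simp
  then have "c j \<notin> clM S" using c_notin_clM[OF S_subset j] by blast
  moreover have "c j \<in> E" using c_mem_B[OF j] B_subset by blast
  ultimately show ?thesis using clD_T_iff by blast
qed

lemma le_i0_if_mem_C: "j \<in> {1..k+1} \<Longrightarrow> c j \<in> C \<Longrightarrow> j \<le> i0"
  using c_le_imp_ge[of j i0] a_le i0 by simp

text \<open>The prefix up to \<open>c_i0 = min C\<close> contains \<open>C - {m}\<close>, whose closure contains \<open>m\<close>.\<close>
lemma cl_prefix_i0_union_clD_T: "clM (S \<union> c ` {1..i0}) \<union> clD T = E"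
proof -
  let ?X = "S \<union> c ` {1..i0}"
  have X_B: "?X \<subseteq> B" using S_subset c_mem_B i0 by auto
  have C_X: "C - {m} \<subseteq> ?X"
  proof
    fix y assume y: "y \<in> C - {m}"
    then have "y \<in> B" using C_spec by auto
    show "y \<in> ?X"
    proof (cases "y \<in> S")
      case False
      then obtain j where "j \<in> {1..k+1}" "y = c j" using \<open>y \<in> B\<close> unfolding S_eq by blast
      then show ?thesis using le_i0_if_mem_C y by auto
    qed simp
  qed
  then have "C - {m} \<subseteq> clM ?X" using M.subset_cl X_B B_subset by blast
  moreover have "m \<in> clM (C - {m})"
  proof -
    have "circuit E indep C" using M.fund_circuit_spec[OF basis_B] m_mem unfolding C_def by auto
    then have "indep (C - {m})" "\<not> indep (insert m (C - {m}))"
      using C_spec(2) unfolding circuit_def by (auto simp: insert_absorb)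
    then show ?thesis using M.in_cl m_mem by blast
  qed
  then have "m \<in> clM ?X" using M.cl_mono[OF C_X] by auto
  ultimately have "C \<subseteq> clM ?X" by auto
  then show ?thesis using clD_T_iff M.cl_subset_ground D.cl_subset_ground by blast
qed

lemma a_notin_cl_prefix: "j < i0 \<Longrightarrow> a \<notin> clM (S \<union> c ` {1..j})"
proof -
  assume j: "j < i0"
  have "{1..j} \<subseteq> {1..k+1}" using i0(1) j by auto
  then have sub: "S \<union> c ` {1..j} \<subseteq> B" using S_subset c_mem_B by blast
  have "a \<notin> c ` {1..j}"
  proof
    assume "a \<in> c ` {1..j}"
    then obtain x where x: "x \<in> {1..j}" "c x = a" by auto
    then have "x = i0" using i0 j inj_onD[OF c_inj, of x i0] by simp
    then show False using x j by simp
  qed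
  moreover have "a \<notin> S"
    unfolding S_eq using rev_image_eqI[of i0 _ a c, OF i0(1) i0(2)[symmetric]] by blast
  ultimately have "c i0 \<notin> S \<union> c ` {1..j}" using i0(2) by simp
  then show ?thesis using c_notin_clM[OF sub i0(1)] i0(2) by simp
qed

lemma i0_characterization:
  "c i0 \<notin> clM S \<union> clD T \<and>
   (\<forall>j\<in>{1..k+1}. c j \<notin> clM S \<union> clD T \<longrightarrow> j \<le> i0) \<and>
   clM (S \<union> c ` {1..i0}) \<union> clD T = E \<and>
   (\<forall>j\<in>{1..<i0}. clM (S \<union> c ` {1..j}) \<union> clD T \<noteq> E)"
proof (intro conjI ballI impI cl_prefix_i0_union_clD_T)
  show "c i0 \<notin> clM S \<union> clD T" using c_notin_cl_S_T_iff[OF i0(1)] i0(2) a_mem_C by simp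
  fix j
  show "j \<le> i0" if "j \<in> {1..k+1}" "c j \<notin> clM S \<union> clD T"
    using that c_notin_cl_S_T_iff le_i0_if_mem_C by blast
  show "clM (S \<union> c ` {1..j}) \<union> clD T \<noteq> E" if "j \<in> {1..<i0}"
    using that a_notin_cl_prefix[of j] clD_T_iff[OF a_mem_E] a_mem_C a_mem_E by auto
qed

text \<open>\<open>b\<close> enumerates \<open>B\<close> as \<open>e_1, ..., e_(r-k), c_1, ..., c_(k+1)\<close> and \<open>d\<close> enumerates \<open>E - B\<close> as
  \<open>e_(n-k-1), ..., e_(r-k+1), m\<close>; the components of the pairs in the theorem are closures of prefixes
  of these enumerations.\<close>
definition b :: "nat \<Rightarrow> nat" where
  "b x = (if x \<le> r - k then e x else c (x - (r - k)))"

definition d :: "nat \<Rightarrow> nat" where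
  "d y = (if y \<le> n - r - 1 then e (n - k - y) else m)"

abbreviation flagF :: "nat \<Rightarrow> nat set" where "flagF \<equiv> M.flag b"
abbreviation flagG :: "nat \<Rightarrow> nat set" where "flagG \<equiv> D.flag d"

lemma b_prefix_low: "x \<le> r - k \<Longrightarrow> b ` {1..x} = e ` {1..x}"
  unfolding b_def by (intro image_cong) auto

lemma b_prefix_high:
  assumes "r - k \<le> x"
  shows "b ` {1..x} = S \<union> c ` {1..x - (r - k)}"
proof -
  have "{1..x} = {1..r-k} \<union> (\<lambda>t. t + (r - k)) ` {1..x - (r - k)}"
    using assms by (auto simp: image_iff intro!: bexI[of _ "_ - (r - k)"])
  moreover have "b ` {1..r-k} = S" unfolding S_e b_def by (intro image_cong) auto
  moreover have "b ` ((\<lambda>t. t + (r - k)) ` {1..x - (r - k)}) = c ` {1..x - (r - k)}"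
    unfolding image_image b_def by (intro image_cong) auto
  ultimately show ?thesis by (simp add: image_Un)
qed

lemma b_image: "b ` {1..r+1} = B"
  using b_prefix_high[of "r + 1"] k_le_r S_eq c_img IA_subset by auto

lemma inj_b: "inj_on b {1..r+1}"
  using eq_card_imp_inj_on[of "{1..r+1}" b] b_image card_B by simp

lemma d_prefix:
  assumes "y \<le> n - r - 1"
  shows "d ` {1..y} = e ` {n-k-y..n-k-1}"
proof -
  have "{n-k-y..n-k-1} = (\<lambda>t. n - k - t) ` {1..y}"
    using image_diff_atLeastAtMost[of "n - k" y] assms k_le_r r_less_n by simp
  moreover have "d ` {1..y} = e ` ((\<lambda>t. n - k - t) ` {1..y})"
    unfolding d_def image_image using assms by (intro image_cong) auto
  ultimately show ?thesis by simp
qed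

lemma d_prefix_T: "d ` {1..n-r-1} = T"
  using d_prefix[of "n - r - 1"] T_e k_le_r r_less_n by (simp add: Suc_diff_le)

lemma d_image: "d ` {1..n-r} = E - B"
proof -
  have "{1..n-r} = insert (n - r) {1..n-r-1}" using r_less_n by auto
  moreover have "d (n - r) = m" unfolding d_def using r_less_n by auto
  ultimately show ?thesis using d_prefix_T EB_eq by simp
qed

lemma inj_d: "inj_on d {1..n-r}"
  using eq_card_imp_inj_on[of "{1..n-r}" d] d_image card_EB by simp

lemma indep_b_image: "indep (b ` {1..r+1})"
  unfolding b_image by (rule indep_B)

lemma dual_indep_d_image: "dind (d ` {1..n-r})"
  unfolding d_image using M.basis_dual_complement[OF basis_B] unfolding basis_def by blast

lemmas flat_flagF = M.flat_flag[OF inj_b indep_b_image]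
  and flagF_nonempty = M.flag_nonempty[OF inj_b indep_b_image]
  and flagF_subset_iff = M.flag_subset_iff[OF inj_b indep_b_image]
  and flagF_eq_iff = M.flag_eq_iff[OF inj_b indep_b_image]
  and flat_eq_flagF = M.flat_eq_flag[OF inj_b indep_b_image]

lemmas rk_flagG = D.rk_flag[OF inj_d dual_indep_d_image]
  and flat_flagG = D.flat_flag[OF inj_d dual_indep_d_image]
  and flagG_nonempty = D.flag_nonempty[OF inj_d dual_indep_d_image]
  and flagG_subset_iff = D.flag_subset_iff[OF inj_d dual_indep_d_image]
  and flagG_eq_iff = D.flag_eq_iff[OF inj_d dual_indep_d_image]
  and flat_eq_flagG = D.flat_eq_flag[OF inj_d dual_indep_d_image]

lemma flagF_top: "flagF (r + 1) = E"
  using M.flag_top basis_B b_image by simp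

lemma flagG_top: "flagG (n - r) = E"
  using D.flag_top M.basis_dual_complement[OF basis_B] d_image by simp

lemma flagG_T: "flagG (n - r - 1) = clD T"
  unfolding D.flag_def d_prefix_T ..

lemma flagF_low: "x \<le> r - k \<Longrightarrow> flagF x = clM (e ` {1..x})"
  unfolding M.flag_def using b_prefix_low by metis

lemma flagF_high: "r - k \<le> x \<Longrightarrow> flagF x = clM (S \<union> c ` {1..x - (r - k)})"
  unfolding M.flag_def using b_prefix_high by metis

lemma flagG_low: "y \<le> n - r - 1 \<Longrightarrow> flagG y = clD (e ` {n-k-y..n-k-1})"
  unfolding D.flag_def using d_prefix by metis

lemma dual_rank: "rk dind E = n - r"
  using rk_flagG[of "n - r"] flagG_top by simp

definition j0 :: nat where "j0 = r - k + i0"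

lemma j0_bounds: "r - k + 1 \<le> j0" "j0 \<le> r + 1"
  using i0(1) k_le_r unfolding j0_def by auto

lemma flagF_j0_union_clD_T: "flagF j0 \<union> clD T = E"
  using flagF_high[of j0] j0_bounds cl_prefix_i0_union_clD_T unfolding j0_def by simp

lemma a_notin_flagF_clD_T: "a \<notin> flagF (j0 - 1) \<union> clD T"
proof -
  have "flagF (j0 - 1) = clM (S \<union> c ` {1..i0 - 1})"
    using flagF_high[of "j0 - 1"] j0_bounds i0(1) unfolding j0_def by (simp add: diff_diff_left)
  then show ?thesis
    using a_notin_cl_prefix[of "i0 - 1"] i0(1) clD_T_iff a_mem_E a_mem_C by auto
qed

text \<open>If \<open>c_(k+1) \<notin> C\<close>, it lies in \<open>cl^perp(T)\<close>; since it is not a coloop, \<open>T\<close> cannot be empty.\<close>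
lemma corank_ge_2: "i0 \<le> k \<Longrightarrow> 2 \<le> n - r"
proof (rule ccontr)
  assume i0: "i0 \<le> k" and "\<not> 2 \<le> n - r"
  then have "T = {}" using card_T r_less_n finite_subset[of T E] unfolding T_def by auto
  have k1: "k + 1 \<in> {1..k+1}" by simp
  have "c (k + 1) \<notin> C" using le_i0_if_mem_C[OF k1] i0 by auto
  moreover have cE: "c (k + 1) \<in> E" using c_mem_B[OF k1] B_subset by auto
  ultimately have "c (k + 1) \<in> clD {}" using clD_T_iff \<open>T = {}\<close> by auto
  then have "\<not> dind {c (k + 1)}" using D.cl_indep[OF D.indep_empty] by auto
  then show False using dual_indep_singleton[OF cE] by simp
qed

text \<open>\<open>FG j\<close> is the \<open>j\<close>-th pair of the theorem (see \<open>FG_explicit\<close>). Its components have ranks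
  \<open>f_rank j\<close> and \<open>g_rank j\<close>, which trace a monotone staircase through the rectangle
  \<open>[1, r+1] \<times> [1, n-r]\<close>, stepping down in the second coordinate at \<open>j0\<close>.\<close>
definition f_rank :: "nat \<Rightarrow> nat" where "f_rank j = min j (r + 1)"

definition g_rank :: "nat \<Rightarrow> nat" where
  "g_rank j = (if j < j0 then n - r else min (n - r - 1) (n - j))"

definition FG :: "nat \<Rightarrow> nat set \<times> nat set" where
  "FG j = (flagF (f_rank j), flagG (g_rank j))"

lemma f_rank_bounds: "1 \<le> j \<Longrightarrow> 1 \<le> f_rank j \<and> f_rank j \<le> r + 1"
  unfolding f_rank_def by auto

lemma g_rank_bounds:
  assumes j: "j \<in> {1..n-1}"
  shows "1 \<le> g_rank j \<and> g_rank j \<le> n - r"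
proof (cases "j < j0")
  case False
  have "2 \<le> n - r"
  proof (cases "r < j")
    case True then show ?thesis using j by auto
  next
    case False then show ?thesis using \<open>\<not> j < j0\<close> corank_ge_2 unfolding j0_def by auto
  qed
  then show ?thesis using j False unfolding g_rank_def by auto
qed (use r_less_n in \<open>auto simp: g_rank_def\<close>)

lemma f_rank_mono: "j \<le> j' \<Longrightarrow> f_rank j \<le> f_rank j'"
  unfolding f_rank_def by auto

lemma g_rank_antimono: "j \<le> j' \<Longrightarrow> g_rank j' \<le> g_rank j"
  unfolding g_rank_def by auto

lemma FG_inj: "inj_on FG {1..n-1}"
proof (rule inj_onI)
  fix j j' assume j: "j \<in> {1..n-1}" and j': "j' \<in> {1..n-1}" and eq: "FG j = FG j'"
  have "f_rank j = f_rank j'"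
    using flagF_eq_iff f_rank_bounds j j' eq unfolding FG_def by auto
  moreover have "g_rank j = g_rank j'"
    using flagG_eq_iff g_rank_bounds[OF j] g_rank_bounds[OF j'] eq unfolding FG_def by auto
  ultimately show "j = j'"
    unfolding f_rank_def g_rank_def using j0_bounds j j' by (auto simp: min_def split: if_splits)
qed

lemma FG_biflat:
  assumes j: "j \<in> {1..n-1}"
  shows "biflat E indep (FG j)"
proof -
  note f = f_rank_bounds[of j] and g = g_rank_bounds[OF j]
  have cover: "flagF (f_rank j) \<union> flagG (g_rank j) = E"
  proof (cases "g_rank j = n - r \<or> f_rank j = r + 1")
    case True
    then show ?thesis
      using flagF_top flagG_top M.flag_subset_ground[of b] D.flag_subset_ground[of d]
      by (metis Un_absorb1 Un_absorb2)
  next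
    case False
    then have "j0 \<le> j" "j \<le> r" "g_rank j = n - r - 1"
      unfolding f_rank_def g_rank_def by (auto split: if_splits)
    then have "flagF j0 \<subseteq> flagF (f_rank j)" "flagG (g_rank j) = clD T"
      using M.flag_mono flagG_T unfolding f_rank_def by auto
    then show ?thesis
      using flagF_j0_union_clD_T M.flag_subset_ground D.flag_subset_ground by blast
  qed
  have "\<not> (flagF (f_rank j) = E \<and> flagG (g_rank j) = E)"
  proof
    assume "flagF (f_rank j) = E \<and> flagG (g_rank j) = E"
    then have "f_rank j = r + 1" "g_rank j = n - r"
      using flagF_eq_iff[of "f_rank j" "r + 1"] flagG_eq_iff[of "g_rank j" "n - r"]
        flagF_top flagG_top f g j by auto
    then show False unfolding f_rank_def g_rank_def using j0_bounds j by (auto split: if_splits)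
  qed
  then show ?thesis unfolding biflat_def FG_def dual_flat_def
    using flat_flagF flat_flagG flagF_nonempty flagG_nonempty f g j cover by auto
qed

lemma FG_compatible: "j \<in> {1..n-1} \<Longrightarrow> j' \<in> {1..n-1} \<Longrightarrow> compatible (FG j) (FG j')"
  unfolding compatible_def FG_def
  using M.flag_mono[OF f_rank_mono] D.flag_mono[OF g_rank_antimono] by (cases "j \<le> j'") auto

lemma FG_union: "(\<Union>(F, G)\<in>FG ` {1..n-1}. F \<inter> G) \<noteq> E"
proof -
  have sub: "(\<Union>(F, G)\<in>FG ` {1..n-1}. F \<inter> G) \<subseteq> flagF (j0 - 1) \<union> clD T"
  proof (rule UN_least)
    fix p assume "p \<in> FG ` {1..n-1}"
    then obtain j where j: "p = FG j" by auto
    show "(case p of (F, G) \<Rightarrow> F \<inter> G) \<subseteq> flagF (j0 - 1) \<union> clD T"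
    proof (cases "j < j0")
      case True
      then have "flagF (f_rank j) \<subseteq> flagF (j0 - 1)"
        using M.flag_mono unfolding f_rank_def by auto
      then show ?thesis using j unfolding FG_def by auto
    next
      case False
      then have "g_rank j \<le> n - r - 1" unfolding g_rank_def by simp
      then have "flagG (g_rank j) \<subseteq> clD T" using D.flag_mono flagG_T by metis
      then show ?thesis using j unfolding FG_def by auto
    qed
  qed
  show ?thesis using subsetD[OF sub] a_notin_flagF_clD_T a_mem_E by metis
qed

lemma FG_biflag: "biflag E indep (FG ` {1..n-1})"
  unfolding biflag_def using FG_biflat FG_compatible FG_union by blast

lemma rank_pair_on_path:
  assumes A: "1 \<le> A" "A \<le> r + 1" and Bd: "1 \<le> Bd" "Bd \<le> n - r"
    and low: "A < j0 \<Longrightarrow> Bd = n - r" and high: "j0 \<le> A \<Longrightarrow> Bd < n - r"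
    and comparable: "\<And>j. j \<in> {1..n-1} \<Longrightarrow>
      (A \<le> f_rank j \<and> g_rank j \<le> Bd) \<or> (f_rank j \<le> A \<and> Bd \<le> g_rank j)"
  shows "\<exists>j\<in>{1..n-1}. f_rank j = A \<and> g_rank j = Bd"
proof -
  consider "A < j0" | "j0 \<le> A" "A \<le> r" | "A = r + 1" using A by linarith
  then show ?thesis
  proof cases
    case 1
    then have "f_rank A = A" "g_rank A = Bd" "A \<in> {1..n-1}"
      using A low j0_bounds r_less_n unfolding f_rank_def g_rank_def by auto
    then show ?thesis by blast
  next
    case 2
    then have r1: "r + 1 \<in> {1..n-1}" using Bd high by auto
    have "f_rank (r + 1) = r + 1" "g_rank (r + 1) = n - r - 1"
      using j0_bounds unfolding f_rank_def g_rank_def by auto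
    then have "Bd = n - r - 1" using comparable[OF r1] 2 high by auto
    moreover have "f_rank A = A" "g_rank A = n - r - 1" "A \<in> {1..n-1}"
      using 2 A r_less_n unfolding f_rank_def g_rank_def by auto
    ultimately show ?thesis by metis
  next
    case 3
    then have "f_rank (n - Bd) = A" "g_rank (n - Bd) = Bd" "n - Bd \<in> {1..n-1}"
      using Bd high j0_bounds unfolding f_rank_def g_rank_def by auto
    then show ?thesis by blast
  qed
qed

lemma a_notin_flags_below:
  assumes "A < j0" "Bd < n - r"
  shows "a \<notin> flagF A \<union> flagG Bd"
proof -
  have "flagF A \<subseteq> flagF (j0 - 1)" using assms(1) M.flag_mono by simp
  moreover have "flagG Bd \<subseteq> flagG (n - r - 1)" using assms(2) D.flag_mono by simp
  ultimately show ?thesis using a_notin_flagF_clD_T flagG_T by blast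
qed

lemma flagF_union_FG_covers:
  assumes "j0 \<le> A" "A \<le> r"
  shows "flagF A \<union> (\<Union>(F, G)\<in>FG ` {1..n-1}. F \<inter> G) = E"
proof -
  have "i0 \<le> k" using assms k_le_r unfolding j0_def by simp
  then have "r + 1 \<in> {1..n-1}" using corank_ge_2 by auto
  then have "(case FG (r + 1) of (F, G) \<Rightarrow> F \<inter> G) \<subseteq> (\<Union>(F, G)\<in>FG ` {1..n-1}. F \<inter> G)"
    by (intro UN_upper imageI)
  moreover have "FG (r + 1) = (E, clD T)"
    unfolding FG_def f_rank_def g_rank_def using j0_bounds flagF_top flagG_T by auto
  ultimately have "clD T \<subseteq> (\<Union>(F, G)\<in>FG ` {1..n-1}. F \<inter> G)"
    using D.cl_subset_ground[of T] by (simp add: Int_absorb1)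
  moreover have "flagF j0 \<subseteq> flagF A" using assms(1) M.flag_mono by simp
  ultimately have "flagF j0 \<union> clD T \<subseteq> flagF A \<union> (\<Union>(F, G)\<in>FG ` {1..n-1}. F \<inter> G)"
    by (rule Un_mono[rotated])
  then have "E \<subseteq> flagF A \<union> (\<Union>(F, G)\<in>FG ` {1..n-1}. F \<inter> G)"
    unfolding flagF_j0_union_clD_T .
  moreover have "flagF A \<union> (\<Union>(F, G)\<in>FG ` {1..n-1}. F \<inter> G) \<subseteq> E"
    using M.flag_subset_ground biflag_union_psubset[OF FG_biflag] by (intro Un_least) auto
  ultimately show ?thesis by (rule antisym[rotated])
qed

lemma flat_eq_flagF_rk:
  assumes F: "flat E indep F" "F \<noteq> {}"
    and compat: "\<forall>j\<in>{1..n-1}. compatible (F, G) (FG j)"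
  shows "F = flagF (rk indep F)" "1 \<le> rk indep F" "rk indep F \<le> r + 1"
proof -
  let ?A = "rk indep F"
  have FE: "F \<subseteq> E" using F(1) unfolding flat_def by simp
  show A1: "1 \<le> ?A" using F(2) FE M.rk_pos indep_singleton by blast
  show Ar: "?A \<le> r + 1" using M.rk_mono[OF FE] rank by simp
  show "F = flagF ?A"
  proof (cases "?A = r + 1")
    case True
    then show ?thesis using flat_eq_flagF[OF F(1)] FE flagF_top by simp
  next
    case False
    then have "?A \<in> {1..n-1}" "f_rank ?A = ?A" using A1 Ar r_less_n unfolding f_rank_def by auto
    then have "compatible (F, G) (flagF ?A, flagG (g_rank ?A))" using compat unfolding FG_def by metis
    then have "F \<subseteq> flagF ?A \<or> flagF ?A \<subseteq> F" unfolding compatible_def by auto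
    then show ?thesis using flat_eq_flagF[OF F(1)] Ar by simp
  qed
qed

lemma flat_eq_flagG_rk:
  assumes G: "dual_flat E indep G" "G \<noteq> {}"
    and compat: "\<forall>j\<in>{1..n-1}. compatible (F, G) (FG j)"
  shows "G = flagG (rk dind G)" "1 \<le> rk dind G" "rk dind G \<le> n - r"
proof -
  let ?B = "rk dind G"
  have G': "flat E dind G" using G(1) unfolding dual_flat_def .
  have GE: "G \<subseteq> E" using G' unfolding flat_def by simp
  show B1: "1 \<le> ?B" using G(2) GE D.rk_pos dual_indep_singleton by blast
  show Br: "?B \<le> n - r" using D.rk_mono[OF GE] dual_rank by simp
  show "G = flagG ?B"
  proof (cases "?B = n - r")
    case True
    then show ?thesis using flat_eq_flagG[OF G'] GE flagG_top by simp
  next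
    case False
    then have "n - ?B \<in> {1..n-1}" "g_rank (n - ?B) = ?B"
      using B1 Br j0_bounds unfolding g_rank_def by auto
    then have "compatible (F, G) (flagF (f_rank (n - ?B)), flagG ?B)"
      using compat unfolding FG_def by metis
    then have "G \<subseteq> flagG ?B \<or> flagG ?B \<subseteq> G" unfolding compatible_def by auto
    then show ?thesis using flat_eq_flagG[OF G'] Br by simp
  qed
qed

lemma mem_FG_if_biflag_insert:
  assumes biflag: "biflag E indep (insert (F, G) (FG ` {1..n-1}))"
  shows "(F, G) \<in> FG ` {1..n-1}"
proof -
  have bf: "flat E indep F" "F \<noteq> {}" "dual_flat E indep G" "G \<noteq> {}"
    "\<not> (F = E \<and> G = E)" "F \<union> G = E"
    using biflag unfolding biflag_def biflat_def by auto
  have compat: "\<forall>j\<in>{1..n-1}. compatible (F, G) (FG j)"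
    using biflag unfolding biflag_def by auto
  have uncovered: "F \<inter> G \<union> (\<Union>(F', G')\<in>FG ` {1..n-1}. F' \<inter> G') \<subset> E"
    using biflag_union_psubset[OF biflag] by simp
  define A where "A = rk indep F"
  define Bd where "Bd = rk dind G"
  have F_eq: "F = flagF A" and A: "1 \<le> A" "A \<le> r + 1"
    using flat_eq_flagF_rk[OF bf(1,2) compat] unfolding A_def by auto
  have G_eq: "G = flagG Bd" and Bd: "1 \<le> Bd" "Bd \<le> n - r"
    using flat_eq_flagG_rk[OF bf(3,4) compat] unfolding Bd_def by auto
  have low: "Bd = n - r" if "A < j0"
  proof (rule ccontr)
    assume "Bd \<noteq> n - r"
    then have "Bd < n - r" using Bd by simp
    then have "a \<notin> F \<union> G" using a_notin_flags_below[OF that] F_eq G_eq by simp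
    then show False using bf(6) a_mem_E by blast
  qed
  have high: "Bd < n - r" if "j0 \<le> A"
  proof (rule ccontr)
    assume "\<not> Bd < n - r"
    then have GE: "G = E" using G_eq Bd flagG_top by auto
    then have "A \<le> r" using bf(5) F_eq A flagF_top by (metis le_Suc_eq Suc_eq_plus1)
    moreover have "F \<inter> G = F" using GE bf(1) unfolding flat_def by auto
    ultimately have "F \<inter> G \<union> (\<Union>(F', G')\<in>FG ` {1..n-1}. F' \<inter> G') = E"
      using flagF_union_FG_covers[OF that] F_eq by simp
    then show False using uncovered by simp
  qed
  have comparable: "(A \<le> f_rank j \<and> g_rank j \<le> Bd) \<or> (f_rank j \<le> A \<and> Bd \<le> g_rank j)"
    if j: "j \<in> {1..n-1}" for j
  proof -
    have "compatible (flagF A, flagG Bd) (flagF (f_rank j), flagG (g_rank j))"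
      using compat j unfolding F_eq G_eq FG_def by blast
    then show ?thesis
      using A Bd f_rank_bounds[of j] g_rank_bounds[OF j] j flagF_subset_iff flagG_subset_iff
      unfolding compatible_def by auto
  qed
  obtain j where "j \<in> {1..n-1}" "f_rank j = A" "g_rank j = Bd"
    using rank_pair_on_path[OF A Bd low high comparable] by blast
  then show ?thesis unfolding FG_def F_eq G_eq by auto
qed

lemma FG_maximal: "maximal_biflag E indep (FG ` {1..n-1})"
  unfolding maximal_biflag_def
proof (intro conjI allI impI FG_biflag)
  fix Y assume Y: "biflag E indep Y \<and> FG ` {1..n-1} \<subseteq> Y"
  have "p \<in> FG ` {1..n-1}" if p: "p \<in> Y" for p
  proof -
    obtain F G where p_eq: "p = (F, G)" by (cases p)
    have "insert (F, G) (FG ` {1..n-1}) \<subseteq> Y" using Y p p_eq by blast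
    then have "biflag E indep (insert (F, G) (FG ` {1..n-1}))" using biflag_subset Y by blast
    then show ?thesis using mem_FG_if_biflag_insert p_eq by blast
  qed
  then show "Y = FG ` {1..n-1}" using Y by blast
qed

lemma FG_explicit:
  assumes j: "j \<in> {1..n-1}"
  shows "FG j =
    (if j \<le> r - k then (clM (e ` {1..j}), E)
     else if j - (r - k) \<le> i0 - 1 then (clM (S \<union> c ` {1..j - (r - k)}), E)
     else if j \<le> r then (clM (S \<union> c ` {1..j - (r - k)}), clD T)
     else (E, clD (e ` {j - k..n - k - 1})))"
proof -
  consider "j \<le> r - k" | "r - k < j" "j < j0" | "j0 \<le> j" "j \<le> r" | "r < j"
    using j0_bounds by linarith
  then show ?thesis
  proof cases
    case 1
    then have "f_rank j = j" "g_rank j = n - r"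
      using j0_bounds unfolding f_rank_def g_rank_def by auto
    then show ?thesis using 1 flagF_low flagG_top unfolding FG_def by simp
  next
    case 2
    then have "f_rank j = j" "g_rank j = n - r" "j - (r - k) \<le> i0 - 1"
      using j0_bounds unfolding f_rank_def g_rank_def j0_def by auto
    then show ?thesis using 2 flagF_high flagG_top unfolding FG_def by simp
  next
    case 3
    then have "f_rank j = j" "g_rank j = n - r - 1" "\<not> j - (r - k) \<le> i0 - 1" "\<not> j \<le> r - k"
      using j0_bounds i0(1) unfolding f_rank_def g_rank_def j0_def by auto
    then show ?thesis using 3 flagF_high flagG_T unfolding FG_def by simp
  next
    case 4
    then have "f_rank j = r + 1" "g_rank j = n - j" "\<not> j - (r - k) \<le> i0 - 1" "\<not> j \<le> r - k"
      using j0_bounds i0(1) j unfolding f_rank_def g_rank_def j0_def by auto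
    moreover have "n - k - (n - j) = j - k" using 4 j k_le_r by auto
    moreover have "n - j \<le> n - r - 1" using 4 by auto
    ultimately show ?thesis using 4 flagF_top flagG_low[of "n - j"] unfolding FG_def by simp
  qed
qed

lemma explicit_pairs_maximal_biflag:
  defines "P \<equiv> \<lambda>j.
    if j \<le> r - k then (clM (e ` {1..j}), E)
    else if j - (r - k) \<le> i0 - 1 then (clM (S \<union> c ` {1..j - (r - k)}), E)
    else if j \<le> r then (clM (S \<union> c ` {1..j - (r - k)}), clD T)
    else (E, clD (e ` {j - k..n - k - 1}))"
  shows "inj_on P {1..n-1} \<and> maximal_biflag E indep (P ` {1..n-1})"
proof -
  have eq: "FG j = P j" if "j \<in> {1..n-1}" for j
    unfolding P_def using FG_explicit[OF that] .
  have "P ` {1..n-1} = FG ` {1..n-1}" using eq by (intro image_cong) auto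
  moreover have "inj_on P {1..n-1}" using FG_inj eq inj_on_cong by blast
  ultimately show ?thesis using FG_maximal by simp
qed

end

theorem mainTheorem5:
  fixes n r k :: nat and indep :: "nat set \<Rightarrow> bool" and B :: "nat set"
    and c e :: "nat \<Rightarrow> nat"
  assumes M: "matroid {0..n} indep"
    and no_loops: "\<forall>x\<in>{0..n}. \<not> loop {0..n} indep x"
    and no_coloops: "\<forall>x\<in>{0..n}. \<not> coloop {0..n} indep x"
    and rank: "rk indep {0..n} = r + 1"
    and nbc: "nbc_basis {0..n} indep B"
    and c_img: "IA {0..n} indep B = c ` {1..k+1}"
    and c_dec: "\<forall>a\<in>{1..k+1}. \<forall>b\<in>{1..k+1}. a < b \<longrightarrow> c b < c a"
    and S_img: "B - IA {0..n} indep B = e ` {1..r-k}"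
    and S_dec: "\<forall>a\<in>{1..r-k}. \<forall>b\<in>{1..r-k}. a < b \<longrightarrow> e b < e a"
    and T_img: "({0..n} - B) - {Min ({0..n} - B)} = e ` {r-k+1..n-k-1}"
    and T_inc: "\<forall>a\<in>{r-k+1..n-k-1}. \<forall>b\<in>{r-k+1..n-k-1}. a < b \<longrightarrow> e a < e b"
  shows
    "let E = {0..n};
         S = B - IA E indep B;
         T = (E - B) - {Min (E - B)};
         clM = cl E indep;
         clD = dual_cl E indep
     in \<exists>i\<in>{1..k+1}.
          \<comment> \<open>(1) i is the largest index with c_i not in cl(S) \<union> cl^perp(T) ...\<close>
          c i \<notin> clM S \<union> clD T \<and>
          (\<forall>j\<in>{1..k+1}. c j \<notin> clM S \<union> clD T \<longrightarrow> j \<le> i) \<and>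
          \<comment> \<open>... and the smallest index with cl(S \<union> {c_1..c_i}) \<union> cl^perp(T) = E\<close>
          clM (S \<union> c ` {1..i}) \<union> clD T = E \<and>
          (\<forall>j\<in>{1..<i}. clM (S \<union> c ` {1..j}) \<union> clD T \<noteq> E) \<and>
          \<comment> \<open>(2) the n-1 pairs F^+_j | G^+_j form a maximal biflag\<close>
          (let FG = (\<lambda>j.
                 if j \<le> r - k then (clM (e ` {1..j}), E)
                 else if j - (r - k) \<le> i - 1 then (clM (S \<union> c ` {1..j - (r - k)}), E)
                 else if j \<le> r then (clM (S \<union> c ` {1..j - (r - k)}), clD T)
                 else (E, clD (e ` {j - k..n - k - 1})))
           in inj_on FG {1..n-1} \<and> maximal_biflag E indep (FG ` {1..n-1}))"
proof -
  interpret ordered_nbc_basis n r k indep B c e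
    using M no_loops no_coloops rank nbc c_img c_dec S_img T_img by unfold_locales
  show ?thesis
    unfolding Let_def dual_cl_def
    using i0(1) i0_characterization explicit_pairs_maximal_biflag
    unfolding S_def T_def m_def by blast
qed

end
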